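(* Let $(X,T)$ be a compact Hausdorff flow in which every point of $X$ is almost automorphic. Then $(X,T)$ is distal, the enveloping semigroup $\mathcal E(X,T)$ is a group, and whenever $\{t_i\}_{i\in I}\subset T$ is a net with $t_i\to g\in\mathcal E(X,T)$ (in the product topology of $X^X$), the net $\{t_i^{-1}\}_{i\in I}$ converges to $g^{-1}\in\mathcal E(X,T)$.
   Context: $X$ compact Hausdorff, $T$ a topological group acting continuously on $X$. A point $x$ is almost automorphic if for every net $\{t_i\}\subset T$ with $t_ix\to y$ it holds that $t_i^{-1}y\to x$. Two points $x,y$ are proximal if there are a net $\{t_i\}\subset T$ and $z\in X$ with $t_ix\to z$ and $t_iy\to z$; the flow is distal if no two distinct points are proximal. The enveloping semigroup $\mathcal E(X,T)$ is the closure of (the maps given by) $T$ in $X^X$ with the product (pointwise convergence) topology, with composition as semigroup operation. *)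

theory Defs
  imports "HOL-Analysis.Analysis"
begin

definition flow :: "('g::topological_group_add \<Rightarrow> 'x::topological_space \<Rightarrow> 'x) \<Rightarrow> bool" where
  "flow act \<longleftrightarrow> (\<forall>x. act 0 x = x) \<and> (\<forall>s t x. act (s + t) x = act s (act t x))
     \<and> continuous_on UNIV (\<lambda>(t, x). act t x)"

text \<open>Nets in T are represented by filters on T (the image filter of the net).\<close>
definition almost_automorphic :: "('g::group_add \<Rightarrow> 'x::topological_space \<Rightarrow> 'x) \<Rightarrow> 'x \<Rightarrow> bool" where
  "almost_automorphic act x \<longleftrightarrow>
     (\<forall>(F::'g filter) y. ((\<lambda>t. act t x) \<longlongrightarrow> y) F \<longrightarrow> ((\<lambda>t. act (- t) y) \<longlongrightarrow> x) F)"

definition proximal :: "('g \<Rightarrow> 'x::topological_space \<Rightarrow> 'x) \<Rightarrow> 'x \<Rightarrow> 'x \<Rightarrow> bool" where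
  "proximal act x y \<longleftrightarrow> (\<exists>(F::'g filter) z. F \<noteq> bot \<and>
     ((\<lambda>t. act t x) \<longlongrightarrow> z) F \<and> ((\<lambda>t. act t y) \<longlongrightarrow> z) F)"

definition distal :: "('g \<Rightarrow> 'x::topological_space \<Rightarrow> 'x) \<Rightarrow> bool" where
  "distal act \<longleftrightarrow> (\<forall>x y. proximal act x y \<longrightarrow> x = y)"

definition enveloping :: "('g \<Rightarrow> 'x \<Rightarrow> 'x::topological_space) \<Rightarrow> ('x \<Rightarrow> 'x) set" where
  "enveloping act = closure (range act)"

definition is_comp_group :: "('x \<Rightarrow> 'x) set \<Rightarrow> bool" where
  "is_comp_group E \<longleftrightarrow> id \<in> E \<and> (\<forall>f\<in>E. \<forall>g\<in>E. f \<circ> g \<in> E)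
     \<and> (\<forall>f\<in>E. \<exists>g\<in>E. f \<circ> g = id \<and> g \<circ> f = id)"

end

theory Submission imports Defs begin

(* The argument runs as follows.
   1. If every point is almost automorphic, two proximal points x, y satisfy
      t_i x -> z <- t_i y, hence x <- t_i^{-1} z -> y, so x = y: the flow is distal.
   2. Every g in E(X,T) is a limit t_i -> g along a proper net.  Distality makes g
      injective (g x = g y means x, y proximal); compactness plus almost automorphy
      make g surjective (a cluster point x of t_i^{-1} y satisfies g x = y).
   3. For such g, almost automorphy applied at inv g x gives t_i^{-1} -> inv g
      pointwise, so inv g lies in the closed set E(X,T).
   4. Continuity of each act s shows E(X,T) is closed under left translation by
      act s, and then (taking limits) under composition; id = act 0 lies in it. *)

lemma tendsto_fun_iff:
  fixes f :: "'a \<Rightarrow> 'b \<Rightarrow> 'c::topological_space"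
  shows "(f \<longlongrightarrow> g) F \<longleftrightarrow> (\<forall>x. ((\<lambda>t. f t x) \<longlongrightarrow> g x) F)"
  using limitin_componentwise[of "\<lambda>i. euclidean" UNIV f g F]
  by (simp add: euclidean_product_topology)

text \<open>Refining a net by a cluster point of its image: if H meets the image filter of
  F under f, then F can be refined to a proper filter along which f tends into H.\<close>
lemma inf_filtercomap_ne_bot:
  assumes "inf H (filtermap f F) \<noteq> bot"
  shows "inf F (filtercomap f H) \<noteq> bot"
proof
  assume "inf F (filtercomap f H) = bot"
  then have "eventually (\<lambda>_. False) (inf F (filtercomap f H))" by simp
  then obtain Q R where Q: "eventually Q F" and R: "eventually R (filtercomap f H)"
    and QR: "\<forall>t. Q t \<and> R t \<longrightarrow> False"
    unfolding eventually_inf by blast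
  from R obtain R' where R': "eventually R' H" "\<forall>t. R' (f t) \<longrightarrow> R t"
    unfolding eventually_filtercomap by blast
  have "eventually (\<lambda>z. \<not> R' z) (filtermap f F)"
    unfolding eventually_filtermap using Q by (rule eventually_mono) (use QR R'(2) in blast)
  with R'(1) have "eventually (\<lambda>_. False) (inf H (filtermap f F))"
    unfolding eventually_inf by blast
  with assms show False by simp
qed

lemma flow_zero: "flow act \<Longrightarrow> act 0 = id"
  by (auto simp: flow_def)

lemma flow_add: "flow act \<Longrightarrow> act (s + t) x = act s (act t x)"
  by (simp add: flow_def)

lemma flow_continuous:
  fixes act :: "'g::topological_group_add \<Rightarrow> 'x::topological_space \<Rightarrow> 'x"
  assumes "flow act"
  shows "continuous_on UNIV (act s)"
proof -
  have c: "continuous_on UNIV (\<lambda>(t, x). act t x)" using assms by (simp add: flow_def)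
  have "continuous_on UNIV ((\<lambda>(t, x). act t x) \<circ> (\<lambda>x. (s, x)))"
    by (rule continuous_on_compose) (auto intro!: continuous_intros continuous_on_subset[OF c])
  then show ?thesis by (simp add: o_def)
qed

lemma all_almost_automorphicD:
  assumes "\<forall>x. almost_automorphic act x" and "((\<lambda>t. act t x) \<longlongrightarrow> y) F"
  shows "((\<lambda>t. act (- t) y) \<longlongrightarrow> x) F"
  using assms unfolding almost_automorphic_def by blast

lemma all_almost_automorphic_imp_distal:
  fixes act :: "'g::group_add \<Rightarrow> 'x::t2_space \<Rightarrow> 'x"
  assumes "\<forall>x. almost_automorphic act x"
  shows "distal act"
  unfolding distal_def
proof (intro allI impI)
  fix x y assume "proximal act x y"
  then obtain F :: "'g filter" and z where F: "F \<noteq> bot"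
      "((\<lambda>t. act t x) \<longlongrightarrow> z) F" "((\<lambda>t. act t y) \<longlongrightarrow> z) F"
    unfolding proximal_def by blast
  show "x = y"
    by (rule tendsto_unique[OF F(1) all_almost_automorphicD[OF assms F(2)]
          all_almost_automorphicD[OF assms F(3)]])
qed

lemma act_in_enveloping: "act t \<in> enveloping act"
  unfolding enveloping_def by (rule subsetD[OF closure_subset]) simp

lemma closed_enveloping: "closed (enveloping act)"
  by (simp add: enveloping_def)

lemma enveloping_limit_net:
  assumes "g \<in> enveloping act"
  obtains F where "F \<noteq> bot" and "(act \<longlongrightarrow> g) F"
proof
  show "filtercomap act (nhds g) \<noteq> bot"
  proof (rule filtercomap_neq_bot)
    fix P assume "eventually P (nhds g)"
    then obtain S where S: "open S" "g \<in> S" "\<forall>x\<in>S. P x" by (auto simp: eventually_nhds)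
    with assms obtain y where "y \<in> range act" "y \<in> S"
      unfolding enveloping_def by (meson closure_iff_nhds_not_empty order_refl disjoint_iff)
    with S show "\<exists>x. P (act x)" by auto
  qed
  show "(act \<longlongrightarrow> g) (filtercomap act (nhds g))" by (rule filterlim_filtercomap)
qed

lemma enveloping_closed_limit:
  assumes "F \<noteq> bot" and "\<And>t. h t \<in> enveloping act" and "(h \<longlongrightarrow> f) F"
  shows "f \<in> enveloping act"
  by (rule Lim_in_closed_set[OF closed_enveloping _ assms(1,3)]) (simp add: assms(2))

lemma distal_enveloping_inj:
  assumes "distal act" and "g \<in> enveloping act"
  shows "inj g"
proof (rule injI)
  obtain F where F: "F \<noteq> bot" "(act \<longlongrightarrow> g) F" using enveloping_limit_net[OF assms(2)] .
  fix x y assume "g x = g y"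
  then have "proximal act x y"
    using F unfolding proximal_def tendsto_fun_iff by (metis (no_types))
  with assms(1) show "x = y" by (simp add: distal_def)
qed

text \<open>Step 2b: on a compact space with all points almost automorphic, every element of
  E(X,T) is surjective: for a net t_i -> g and a target y, take a cluster point x of
  t_i^{-1} y; along the refined net t_i x -> y by almost automorphy, and t_i x -> g x.\<close>
lemma almost_automorphic_enveloping_surj:
  fixes act :: "'g::group_add \<Rightarrow> 'x::t2_space \<Rightarrow> 'x"
  assumes "compact (UNIV :: 'x set)" and "\<forall>x. almost_automorphic act x"
    and "g \<in> enveloping act"
  shows "surj g"
proof -
  obtain F :: "'g filter" where F: "F \<noteq> bot" "(act \<longlongrightarrow> g) F"
    using enveloping_limit_net[OF assms(3)] .
  have pointwise: "((\<lambda>t. act t x) \<longlongrightarrow> g x) F" for x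
    using F(2) by (simp add: tendsto_fun_iff)
  have "y \<in> range g" for y
  proof -
    let ?back = "\<lambda>t. act (- t) y"
    have "filtermap ?back F \<noteq> bot" using F(1) by (simp add: filtermap_bot_iff)
    then have "\<exists>x. inf (nhds x) (filtermap ?back F) \<noteq> bot"
      using assms(1)[unfolded compact_filter, rule_format] by (simp add: eventually_True)
    then obtain x where x: "inf (nhds x) (filtermap ?back F) \<noteq> bot" ..
    define G where "G = inf F (filtercomap ?back (nhds x))"
    have G_proper: "G \<noteq> bot"
      unfolding G_def using x by (rule inf_filtercomap_ne_bot)
    have "(?back \<longlongrightarrow> x) G"
      unfolding G_def by (rule filterlim_mono[OF filterlim_filtercomap]) auto
    then have "((\<lambda>s. act s y) \<longlongrightarrow> x) (filtermap uminus G)"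
      by (simp add: filterlim_filtermap)
    from all_almost_automorphicD[OF assms(2) this]
    have to_y: "((\<lambda>t. act t x) \<longlongrightarrow> y) G" by (simp add: filterlim_filtermap)
    have to_gx: "((\<lambda>t. act t x) \<longlongrightarrow> g x) G"
      unfolding G_def by (rule filterlim_mono[OF pointwise]) auto
    have "g x = y" by (rule tendsto_unique[OF G_proper to_gx to_y])
    then show ?thesis using rangeI[of g x] by simp
  qed
  then show ?thesis by auto
qed

text \<open>Step 3: if all points are almost automorphic and t_i -> g with g surjective, then
  t_i^{-1} -> inv g (pointwise, applying almost automorphy at the point inv g x).\<close>
lemma almost_automorphic_inverse_limit:
  assumes "\<forall>x. almost_automorphic act x" and "surj g" and "(act \<longlongrightarrow> g) F"
  shows "((\<lambda>t. act (- t)) \<longlongrightarrow> inv g) F"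
  unfolding tendsto_fun_iff
proof
  fix x
  have "((\<lambda>t. act t (inv g x)) \<longlongrightarrow> x) F"
    using assms(3) surj_f_inv_f[OF assms(2)] tendsto_fun_iff by metis
  then show "((\<lambda>t. act (- t) x) \<longlongrightarrow> inv g x) F"
    by (rule all_almost_automorphicD[OF assms(1)])
qed

lemma enveloping_left_translate:
  fixes act :: "'g::topological_group_add \<Rightarrow> 'x::topological_space \<Rightarrow> 'x"
  assumes "flow act" and "g \<in> enveloping act"
  shows "act s \<circ> g \<in> enveloping act"
proof -
  obtain F where F: "F \<noteq> bot" "(act \<longlongrightarrow> g) F" using enveloping_limit_net[OF assms(2)] .
  have "((\<lambda>t. act s (act t x)) \<longlongrightarrow> act s (g x)) F" for x
    by (rule continuous_on_tendsto_compose[OF flow_continuous[OF assms(1)]])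
      (use F(2) in \<open>simp_all add: tendsto_fun_iff\<close>)
  then have "((\<lambda>t. act (s + t)) \<longlongrightarrow> act s \<circ> g) F"
    by (simp add: tendsto_fun_iff flow_add[OF assms(1)])
  then show ?thesis by (rule enveloping_closed_limit[OF F(1) act_in_enveloping])
qed

text \<open>Step 4b: E(X,T) is closed under composition: f \<circ> g is the limit of act t \<circ> g.\<close>
lemma enveloping_comp:
  fixes act :: "'g::topological_group_add \<Rightarrow> 'x::topological_space \<Rightarrow> 'x"
  assumes "flow act" and "f \<in> enveloping act" and "g \<in> enveloping act"
  shows "f \<circ> g \<in> enveloping act"
proof -
  obtain F where F: "F \<noteq> bot" "(act \<longlongrightarrow> f) F" using enveloping_limit_net[OF assms(2)] .
  then have "((\<lambda>t. (act t) \<circ> g) \<longlongrightarrow> f \<circ> g) F" by (simp add: tendsto_fun_iff)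
  then show ?thesis
    by (rule enveloping_closed_limit[OF F(1) enveloping_left_translate[OF assms(1,3)]])
qed

lemma enveloping_bij_inv:
  fixes act :: "'g::group_add \<Rightarrow> 'x::t2_space \<Rightarrow> 'x"
  assumes "compact (UNIV :: 'x set)" and "\<forall>x. almost_automorphic act x"
    and "g \<in> enveloping act"
  shows "bij g" and "inv g \<in> enveloping act"
proof -
  show bij: "bij g"
    using distal_enveloping_inj[OF all_almost_automorphic_imp_distal[OF assms(2)] assms(3)]
      almost_automorphic_enveloping_surj[OF assms] by (simp add: bij_def)
  obtain F where F: "F \<noteq> bot" "(act \<longlongrightarrow> g) F" using enveloping_limit_net[OF assms(3)] .
  show "inv g \<in> enveloping act"
    using almost_automorphic_inverse_limit[OF assms(2) bij_is_surj[OF bij] F(2)]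
    by (rule enveloping_closed_limit[OF F(1) act_in_enveloping])
qed

lemma bij_comp_inv: "bij g \<Longrightarrow> g \<circ> inv g = id \<and> inv g \<circ> g = id"
  by (simp add: bij_is_inj bij_is_surj flip: inj_iff surj_iff)

theorem mainTheorem2:
  fixes act :: "'g::topological_group_add \<Rightarrow> 'x::t2_space \<Rightarrow> 'x"
  assumes "compact (UNIV :: 'x set)"
    and "flow act"
    and "\<forall>x. almost_automorphic act x"
  shows "distal act \<and> is_comp_group (enveloping act) \<and>
    (\<forall>(F::'g filter) g. g \<in> enveloping act \<and> (act \<longlongrightarrow> g) F \<longrightarrow>
        inv g \<in> enveloping act \<and> g \<circ> inv g = id \<and> inv g \<circ> g = id \<and>
        ((\<lambda>t. act (- t)) \<longlongrightarrow> inv g) F)"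
proof (intro conjI allI impI)
  show "distal act" using all_almost_automorphic_imp_distal[OF assms(3)] .
  have "id \<in> enveloping act" using act_in_enveloping[of act 0] flow_zero[OF assms(2)] by simp
  then show "is_comp_group (enveloping act)"
    unfolding is_comp_group_def
    using enveloping_comp[OF assms(2)] enveloping_bij_inv[OF assms(1,3)] bij_comp_inv by blast
next
  fix F :: "'g filter" and g assume g: "g \<in> enveloping act \<and> (act \<longlongrightarrow> g) F"
  have bij: "bij g" using enveloping_bij_inv(1)[OF assms(1,3)] g by blast
  show "inv g \<in> enveloping act" using enveloping_bij_inv(2)[OF assms(1,3)] g by blast
  show "g \<circ> inv g = id" "inv g \<circ> g = id" using bij_comp_inv[OF bij] by simp_all
  show "((\<lambda>t. act (- t)) \<longlongrightarrow> inv g) F"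
    using almost_automorphic_inverse_limit[OF assms(3) bij_is_surj[OF bij]] g by blast
qed

end
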